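(* Let $\mathcal{H}\subseteq\{0,1\}^{\mathcal{X}}$ be a concept class over an arbitrary domain $\mathcal{X}$ and let $m\in\mathbb{N}$. Then $\omega_m\le\omega^\star_m\le 2^m$, where $\omega_m$ and $\omega^\star_m$ are the clique number and fractional clique number of the contradiction graph $G_m(\mathcal{H})$.
   Context: For $m\in\mathbb{N}$, a dataset of size $m$ is a sequence $S=((x_1,y_1),\dots,(x_m,y_m))\in(\mathcal{X}\times\{0,1\})^m$; a hypothesis $h\in\{0,1\}^{\mathcal{X}}$ is consistent with $S$ if $h(x_i)=y_i$ for all $i$; $S$ is $\mathcal{H}$-realizable if some $h\in\mathcal{H}$ is consistent with $S$. We write $(x,y)\in S$ if $(x,y)=(x_i,y_i)$ for some $i$. Let $V_m(\mathcal{H})$ be the set of $\mathcal{H}$-realizable datasets of size $m$. The contradiction graph of order $m$, $G_m(\mathcal{H})$, is the undirected graph with vertex set $V_m(\mathcal{H})$ in which two datasets $S,S'$ are adjacent iff there is $x\in\mathcal{X}$ with $(x,0)\in S$ and $(x,1)\in S'$. $\omega_m$ is the clique number of $G_m(\mathcal{H})$ (supremum of sizes of cliques). A fractional clique of a graph $G=(V,E)$ is a function $\delta:V\to[0,\infty)$ with $\sum_{v\in I}\delta(v)\le 1$ for every independent set $I$ of $G$; its size is $|\delta|=\sum_{v\in V}\delta(v)$; the fractional clique number $\omega^\star(G)$ is the supremum of the sizes of fractional cliques, and $\omega^\star_m:=\omega^\star(G_m(\mathcal{H}))$. *)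

theory Defs
  imports "HOL-Analysis.Analysis"
begin

text \<open>Labels 0/1 are rendered as False/True. A dataset of size m is a list of
  length m of labelled points; a hypothesis is a function 'x => bool.\<close>

type_synonym 'x dataset = "('x \<times> bool) list"

definition consistent :: "('x \<Rightarrow> bool) \<Rightarrow> 'x dataset \<Rightarrow> bool" where
  "consistent h S \<longleftrightarrow> (\<forall>i < length S. h (fst (S ! i)) = snd (S ! i))"

definition realizable :: "('x \<Rightarrow> bool) set \<Rightarrow> 'x dataset \<Rightarrow> bool" where
  "realizable H S \<longleftrightarrow> (\<exists>h\<in>H. consistent h S)"

definition realizable_datasets :: "('x \<Rightarrow> bool) set \<Rightarrow> nat \<Rightarrow> 'x dataset set" where
  "realizable_datasets H m = {S. length S = m \<and> realizable H S}"

definition contra_adj :: "'x dataset \<Rightarrow> 'x dataset \<Rightarrow> bool" where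
  "contra_adj S S' \<longleftrightarrow>
     (\<exists>x. ((x, False) \<in> set S \<and> (x, True) \<in> set S') \<or> ((x, False) \<in> set S' \<and> (x, True) \<in> set S))"

definition is_clique :: "('x \<Rightarrow> bool) set \<Rightarrow> nat \<Rightarrow> 'x dataset set \<Rightarrow> bool" where
  "is_clique H m C \<longleftrightarrow> C \<subseteq> realizable_datasets H m \<and>
     (\<forall>S\<in>C. \<forall>S'\<in>C. S \<noteq> S' \<longrightarrow> contra_adj S S')"

definition is_indep :: "('x \<Rightarrow> bool) set \<Rightarrow> nat \<Rightarrow> 'x dataset set \<Rightarrow> bool" where
  "is_indep H m I \<longleftrightarrow> I \<subseteq> realizable_datasets H m \<and>
     (\<forall>S\<in>I. \<forall>S'\<in>I. S \<noteq> S' \<longrightarrow> \<not> contra_adj S S')"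

definition set_size :: "'a set \<Rightarrow> ennreal" where
  "set_size A = (if finite A then of_nat (card A) else \<infinity>)"

definition clique_number :: "('x \<Rightarrow> bool) set \<Rightarrow> nat \<Rightarrow> ennreal" where
  "clique_number H m = (SUP C \<in> {C. is_clique H m C}. set_size C)"

definition is_frac_clique :: "('x \<Rightarrow> bool) set \<Rightarrow> nat \<Rightarrow> ('x dataset \<Rightarrow> real) \<Rightarrow> bool" where
  "is_frac_clique H m \<delta> \<longleftrightarrow> (\<forall>S. \<delta> S \<ge> 0) \<and>
     (\<forall>I. is_indep H m I \<longrightarrow> (\<Sum>\<^sub>\<infinity>S\<in>I. ennreal (\<delta> S)) \<le> 1)"

definition frac_clique_size :: "('x \<Rightarrow> bool) set \<Rightarrow> nat \<Rightarrow> ('x dataset \<Rightarrow> real) \<Rightarrow> ennreal" where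
  "frac_clique_size H m \<delta> = (\<Sum>\<^sub>\<infinity>S\<in>realizable_datasets H m. ennreal (\<delta> S))"

definition frac_clique_number :: "('x \<Rightarrow> bool) set \<Rightarrow> nat \<Rightarrow> ennreal" where
  "frac_clique_number H m = (SUP \<delta> \<in> {\<delta>. is_frac_clique H m \<delta>}. frac_clique_size H m \<delta>)"

end

theory Submission
  imports Defs
begin

text \<open>The indicator of a clique is a fractional clique, since an independent set meets a clique
  in at most one vertex; this gives the first inequality. For the second, restrict a fractional
  clique \<open>\<delta>\<close> to finitely many datasets, whose points form a finite set \<open>P\<close> with \<open>n\<close> elements,
  and double count over the \<open>2^n\<close> labellings \<open>g\<close> of \<open>P\<close>. The datasets consistent with a fixed \<open>g\<close>
  form an independent set, so they carry weight at most 1; a realizable dataset of size \<open>m\<close>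
  is consistent with at least \<open>2^(n-m)\<close> labellings. Hence \<open>2^(n-m) \<Sum>\<delta> \<le> 2^n\<close>.\<close>

lemma consistent_imp_label: "consistent h S \<Longrightarrow> (x, b) \<in> set S \<Longrightarrow> h x = b"
  unfolding consistent_def by (metis fst_conv in_set_conv_nth snd_conv)

lemma consistent_iff_agree:
  assumes "consistent h S"
  shows "consistent g S \<longleftrightarrow> (\<forall>x \<in> fst ` set S. g x = h x)"
proof
  show "\<forall>x \<in> fst ` set S. g x = h x" if "consistent g S"
    using consistent_imp_label[OF that] consistent_imp_label[OF assms] by fastforce
  show "consistent g S" if "\<forall>x \<in> fst ` set S. g x = h x"
    using that assms unfolding consistent_def by (metis nth_mem image_eqI)
qed

lemma consistent_not_contra_adj:
  assumes "consistent g S" "consistent g S'"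
  shows "\<not> contra_adj S S'"
  using consistent_imp_label[OF assms(1)] consistent_imp_label[OF assms(2)]
  unfolding contra_adj_def by blast

lemma is_indep_consistent_datasets:
  assumes "A \<subseteq> realizable_datasets H m"
  shows "is_indep H m {S \<in> A. consistent g S}"
  using assms consistent_not_contra_adj unfolding is_indep_def by blast

lemma infsum_one_ennreal: "(\<Sum>\<^sub>\<infinity>x\<in>A. 1 :: ennreal) = set_size A"
proof (cases "finite A")
  case False
  then show ?thesis
    by (simp add: set_size_def infsum_superconst_infinite_ennreal[where b=1])
qed (simp add: set_size_def)

lemma infsum_ennreal_le_finite_sums:
  fixes f :: "'a \<Rightarrow> ennreal"
  assumes "\<And>F. finite F \<Longrightarrow> F \<subseteq> A \<Longrightarrow> sum f F \<le> b"
  shows "infsum f A \<le> b"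
  using assms by (intro infsum_le_finite_sums nonneg_summable_on_complete) auto

lemma card_indep_inter_clique_le_1:
  assumes "is_indep H m I" "is_clique H m C" "finite F" "F \<subseteq> I"
  shows "card (F \<inter> C) \<le> 1"
proof -
  have "\<forall>S\<in>F \<inter> C. \<forall>S'\<in>F \<inter> C. S = S'"
    using assms unfolding is_indep_def is_clique_def by blast
  then show ?thesis
    using assms(3) by (simp add: card_le_Suc0_iff_eq)
qed

lemma is_frac_clique_indicator:
  assumes "is_clique H m C"
  shows "is_frac_clique H m (indicator C)"
  unfolding is_frac_clique_def
proof (intro conjI allI impI)
  fix I assume I: "is_indep H m I"
  show "(\<Sum>\<^sub>\<infinity>S\<in>I. ennreal (indicator C S)) \<le> 1"
  proof (rule infsum_ennreal_le_finite_sums)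
    fix F assume F: "finite F" "F \<subseteq> I"
    have "(\<Sum>S\<in>F. ennreal (indicator C S)) = of_nat (card (F \<inter> C))"
      using F(1) by (simp add: indicator_def sum.If_cases Int_def ennreal_of_nat_eq_real_of_nat)
    also have "\<dots> \<le> 1"
      using card_indep_inter_clique_le_1[OF I assms F] by simp
    finally show "(\<Sum>S\<in>F. ennreal (indicator C S)) \<le> 1" .
  qed
qed simp

lemma frac_clique_size_indicator:
  assumes "C \<subseteq> realizable_datasets H m"
  shows "frac_clique_size H m (indicator C) = set_size C"
proof -
  have "frac_clique_size H m (indicator C) = (\<Sum>\<^sub>\<infinity>S\<in>C. 1 :: ennreal)"
    unfolding frac_clique_size_def using assms
    by (intro infsum_cong_neutral) (auto simp: indicator_def)
  then show ?thesis by (simp add: infsum_one_ennreal)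
qed

lemma set_size_le_frac_clique_number:
  assumes "is_clique H m C"
  shows "set_size C \<le> frac_clique_number H m"
proof -
  have "set_size C = frac_clique_size H m (indicator C)"
    using assms by (simp add: is_clique_def frac_clique_size_indicator)
  also have "\<dots> \<le> frac_clique_number H m"
    unfolding frac_clique_number_def
    using is_frac_clique_indicator[OF assms] by (intro SUP_upper) auto
  finally show ?thesis .
qed

lemma card_consistent_labellings:
  assumes "finite P" "fst ` set S \<subseteq> P" "consistent h S"
  shows "card {g \<in> P \<rightarrow>\<^sub>E UNIV. consistent g S} = 2 ^ (card P - card (fst ` set S))"
proof -
  let ?Q = "fst ` set S"
  have "{g \<in> P \<rightarrow>\<^sub>E UNIV. consistent g S} = (\<Pi>\<^sub>E x\<in>P. if x \<in> ?Q then {h x} else UNIV)"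
    using assms(2) consistent_iff_agree[OF assms(3)] by (auto simp: PiE_def Pi_def)
  then have "card {g \<in> P \<rightarrow>\<^sub>E UNIV. consistent g S} = (\<Prod>x\<in>P. if x \<in> ?Q then 1 else 2)"
    using assms(1) by (simp add: card_PiE if_distrib cong: if_cong)
  also have "\<dots> = 2 ^ card (P - ?Q)"
    using assms(1) by (simp add: prod.If_cases Diff_eq Int_def)
  also have "card (P - ?Q) = card P - card ?Q"
    using assms(1,2) by (simp add: card_Diff_subset finite_subset)
  finally show ?thesis .
qed

lemma card_consistent_labellings_ge:
  assumes "finite P" "fst ` set S \<subseteq> P" "S \<in> realizable_datasets H m"
  shows "2 ^ (card P - m) \<le> card {g \<in> P \<rightarrow>\<^sub>E UNIV. consistent g S}"
proof -
  obtain h where "consistent h S" and "length S = m"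
    using assms(3) by (auto simp: realizable_datasets_def realizable_def)
  moreover have "card (fst ` set S) \<le> length S"
    by (metis card_image_le card_length finite_set order_trans)
  ultimately show ?thesis
    using card_consistent_labellings[OF assms(1,2)] by (simp add: power_increasing)
qed

lemma sum_frac_clique_consistent_le_1:
  assumes "is_frac_clique H m \<delta>" "finite F" "F \<subseteq> realizable_datasets H m"
  shows "(\<Sum>S\<in>{S \<in> F. consistent g S}. \<delta> S) \<le> 1"
proof -
  let ?I = "{S \<in> F. consistent g S}"
  have nonneg: "\<And>S. \<delta> S \<ge> 0"
    using assms(1) by (simp add: is_frac_clique_def)
  have "(\<Sum>\<^sub>\<infinity>S\<in>?I. ennreal (\<delta> S)) \<le> 1"
    using assms(1) is_indep_consistent_datasets[OF assms(3)] by (simp add: is_frac_clique_def)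
  then have "ennreal (\<Sum>S\<in>?I. \<delta> S) \<le> ennreal 1"
    using assms(2) nonneg by (simp add: sum_ennreal)
  then show ?thesis by (simp add: ennreal_le_iff2)
qed

lemma sum_frac_clique_le:
  assumes \<delta>: "is_frac_clique H m \<delta>" and F: "finite F" "F \<subseteq> realizable_datasets H m"
  shows "(\<Sum>S\<in>F. \<delta> S) \<le> 2 ^ m"
proof -
  have nonneg: "\<And>S. \<delta> S \<ge> 0"
    using \<delta> by (simp add: is_frac_clique_def)
  define P where "P = (\<Union>S\<in>F. fst ` set S)"
  define G :: "('a \<Rightarrow> bool) set" where "G = P \<rightarrow>\<^sub>E UNIV"
  define n where "n = card P"
  have "finite P" using F(1) by (simp add: P_def)
  then have "finite G" and card_G: "card G = 2 ^ n"
    by (simp_all add: G_def n_def finite_PiE card_PiE)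
  have count: "2 ^ (n - m) \<le> card {g \<in> G. consistent g S}" if "S \<in> F" for S
    using card_consistent_labellings_ge[OF \<open>finite P\<close>] F(2) that
    unfolding G_def n_def P_def by blast
  have "(\<Sum>S\<in>F. \<delta> S) * 2 ^ (n - m) = (\<Sum>S\<in>F. \<delta> S * 2 ^ (n - m))"
    by (simp add: sum_distrib_right)
  also have "\<dots> \<le> (\<Sum>S\<in>F. \<delta> S * card {g \<in> G. consistent g S})"
    using count by (intro sum_mono mult_left_mono nonneg) (simp flip: of_nat_le_iff)
  also have "\<dots> = (\<Sum>S\<in>F. \<Sum>g\<in>{g \<in> G. consistent g S}. \<delta> S)"
    by (simp add: mult.commute)
  also have "\<dots> = (\<Sum>g\<in>G. \<Sum>S\<in>{S \<in> F. consistent g S}. \<delta> S)"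
    using F(1) \<open>finite G\<close> by (rule sum.swap_restrict)
  also have "\<dots> \<le> (\<Sum>g\<in>G. 1)"
    using sum_frac_clique_consistent_le_1[OF \<delta> F] by (intro sum_mono)
  also have "\<dots> \<le> 2 ^ m * 2 ^ (n - m)"
    using card_G by (simp add: power_add[symmetric])
  finally show ?thesis by simp
qed

lemma frac_clique_size_le:
  assumes \<delta>: "is_frac_clique H m \<delta>"
  shows "frac_clique_size H m \<delta> \<le> 2 ^ m"
  unfolding frac_clique_size_def
proof (rule infsum_ennreal_le_finite_sums)
  fix F assume F: "finite F" "F \<subseteq> realizable_datasets H m"
  have "(\<Sum>S\<in>F. ennreal (\<delta> S)) = ennreal (\<Sum>S\<in>F. \<delta> S)"
    using \<delta> by (simp add: is_frac_clique_def sum_ennreal)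
  also have "\<dots> \<le> ennreal (2 ^ m)"
    using sum_frac_clique_le[OF \<delta> F] by (rule ennreal_leI)
  also have "\<dots> = 2 ^ m"
    by (metis ennreal_numeral ennreal_power zero_le_numeral)
  finally show "(\<Sum>S\<in>F. ennreal (\<delta> S)) \<le> 2 ^ m" .
qed

theorem mainTheorem1:
  fixes H :: "('x \<Rightarrow> bool) set" and m :: nat
  shows "clique_number H m \<le> frac_clique_number H m \<and> frac_clique_number H m \<le> 2 ^ m"
proof
  show "clique_number H m \<le> frac_clique_number H m"
    unfolding clique_number_def by (rule SUP_least) (simp add: set_size_le_frac_clique_number)
  show "frac_clique_number H m \<le> 2 ^ m"
    unfolding frac_clique_number_def by (rule SUP_least) (simp add: frac_clique_size_le)
qed

end
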